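(* Let $\alpha \in (0,1)$ be an algebraic number with minimal pair $(p(x),q(x))$. If the additive monoid $M_\alpha = \{f(\alpha) \mid f(x) \in \mathbb{N}_0[x,x^{-1}]\}$ satisfies the ACCP, then $p(x) - Q(x)q(x) \notin \mathbb{N}_0[x,x^{-1}]$ for every nonzero Laurent polynomial $Q(x) \in \mathbb{N}_0[x,x^{-1}]$.
   Context: $\mathbb{N}_0[x,x^{-1}]$ denotes the semiring of Laurent polynomials with coefficients in $\mathbb{N}_0$. For a monic polynomial $f(x) \in \mathbb{Q}[x]$, let $\ell$ be the smallest positive integer with $\ell f(x) \in \mathbb{Z}[x]$; the minimal pair of $f$ is the unique pair $(p(x),q(x))$ with $p,q \in \mathbb{N}_0[x]$, $\ell f = p - q$, and $p,q$ having no monomials of the same degree in common. The minimal pair of a real algebraic number is the minimal pair of its minimal polynomial over $\mathbb{Q}$. A monoid $M$ satisfies the ACCP (ascending chain condition on principal ideals) if every ascending chain of principal ideals $x_1 + M \subseteq x_2 + M \subseteq \cdots$ eventually stabilizes. *)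

theory Defs
  imports "HOL-Computational_Algebra.Polynomial" "HOL-Computational_Algebra.Polynomial_Factorial"
begin

text \<open>Laurent polynomials with coefficients in a semiring are represented by their
 coefficient functions \<open>int \<Rightarrow> 'a\<close> with finite support.\<close>

definition lsupp :: "(int \<Rightarrow> 'a::zero) \<Rightarrow> int set" where
  "lsupp f = {k. f k \<noteq> 0}"

definition is_laurent :: "(int \<Rightarrow> 'a::zero) \<Rightarrow> bool" where
  "is_laurent f \<longleftrightarrow> finite (lsupp f)"

definition in_N0_laurent :: "(int \<Rightarrow> int) \<Rightarrow> bool" where
  "in_N0_laurent h \<longleftrightarrow> is_laurent h \<and> (\<forall>n. h n \<ge> 0)"

definition laurent_eval :: "(int \<Rightarrow> nat) \<Rightarrow> real \<Rightarrow> real" where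
  "laurent_eval f a = (\<Sum>k\<in>lsupp f. real (f k) * a powi k)"

definition laurent_of_poly :: "'a::zero poly \<Rightarrow> int \<Rightarrow> 'a" where
  "laurent_of_poly p n = (if n \<ge> 0 then coeff p (nat n) else 0)"

definition laurent_mult :: "(int \<Rightarrow> 'a::comm_semiring_0) \<Rightarrow> (int \<Rightarrow> 'a) \<Rightarrow> int \<Rightarrow> 'a" where
  "laurent_mult f g n = (\<Sum>k\<in>lsupp f. f k * g (n - k))"

definition M_alpha :: "real \<Rightarrow> real set" where
  "M_alpha a = {laurent_eval f a | f. is_laurent f}"

definition accp :: "real set \<Rightarrow> bool" where
  "accp M \<longleftrightarrow> (\<forall>x :: nat \<Rightarrow> real. (\<forall>n. x n \<in> M) \<and>
      (\<forall>n. (\<lambda>m. x n + m) ` M \<subseteq> (\<lambda>m. x (Suc n) + m) ` M) \<longrightarrow>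
      (\<exists>N. \<forall>n\<ge>N. (\<lambda>m. x n + m) ` M = (\<lambda>m. x N + m) ` M))"

definition is_min_poly_rat :: "real \<Rightarrow> rat poly \<Rightarrow> bool" where
  "is_min_poly_rat a f \<longleftrightarrow> lead_coeff f = 1 \<and> irreducible f \<and>
      poly (map_poly of_rat f) a = 0"

definition is_minimal_pair :: "rat poly \<Rightarrow> nat poly \<Rightarrow> nat poly \<Rightarrow> bool" where
  "is_minimal_pair f p q \<longleftrightarrow>
     (\<exists>l::nat. l = (LEAST l::nat. l > 0 \<and> (\<forall>i. coeff (smult (of_nat l) f) i \<in> \<int>)) \<and>
        smult (of_nat l) f = map_poly of_nat p - map_poly of_nat q \<and>
        (\<forall>i. coeff p i = 0 \<or> coeff q i = 0))"

end

theory Submission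
  imports Defs
begin

text \<open>Suppose \<open>p - Q q\<close> has nonnegative coefficients and \<open>Q\<close> has a nonzero coefficient at
  \<open>x\<^sup>k\<close>. Then already \<open>p - x\<^sup>k q\<close> has nonnegative coefficients. Since \<open>\<ell> f = p - q\<close>
  with \<open>\<ell> > 0\<close>, we have \<open>p(\<alpha>) = q(\<alpha>) = c\<close> and \<open>q \<noteq> 0\<close>, so \<open>c > 0\<close>. For \<open>k = 0\<close> the
  coefficientwise inequality \<open>q \<le> p\<close> contradicts the disjointness of the supports of \<open>p\<close> and
  \<open>q\<close>. Otherwise \<open>r = p(\<alpha>) - \<alpha>\<^sup>k q(\<alpha>) = c - \<alpha>\<^sup>k c\<close> is a nonzero element of \<open>M\<^sub>\<alpha>\<close>, and
  the elements \<open>\<alpha>\<^bsup>jk\<^esup> c = \<alpha>\<^bsup>(j+1)k\<^esup> c + \<alpha>\<^bsup>jk\<^esup> r\<close> generate a strictly ascending chain of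
  principal ideals, because \<open>M\<^sub>\<alpha>\<close> consists of nonnegative reals.\<close>

lemma not_accp_if_strictly_descending:
  fixes M :: "real set" and x d :: "nat \<Rightarrow> real"
  assumes nonneg: "\<And>y. y \<in> M \<Longrightarrow> 0 \<le> y"
    and zero: "0 \<in> M"
    and add: "\<And>y z. y \<in> M \<Longrightarrow> z \<in> M \<Longrightarrow> y + z \<in> M"
    and x: "\<And>n. x n \<in> M" and d: "\<And>n. d n \<in> M" "\<And>n. d n \<noteq> 0"
    and step: "\<And>n. x n = x (Suc n) + d n"
  shows "\<not> accp M"
proof
  assume "accp M"
  moreover have "(\<lambda>m. x n + m) ` M \<subseteq> (\<lambda>m. x (Suc n) + m) ` M" for n
  proof
    fix y assume "y \<in> (\<lambda>m. x n + m) ` M"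
    then obtain m where "m \<in> M" "y = x n + m" by blast
    moreover have "x n + m = x (Suc n) + (d n + m)" using step[of n] by linarith
    ultimately show "y \<in> (\<lambda>m. x (Suc n) + m) ` M" using add d by auto
  qed
  ultimately obtain N where N: "\<forall>n\<ge>N. (\<lambda>m. x n + m) ` M = (\<lambda>m. x N + m) ` M"
    using x unfolding accp_def by blast
  have "x (Suc N) + 0 \<in> (\<lambda>m. x (Suc N) + m) ` M" using zero by blast
  then have "x (Suc N) \<in> (\<lambda>m. x N + m) ` M" using N[rule_format, of "Suc N"] by simp
  then obtain m where "m \<in> M" "x (Suc N) = x N + m" by blast
  moreover have "0 \<le> d N" using d(1) nonneg by blast
  ultimately show False using step[of N] d(2)[of N] nonneg by force
qed

lemma laurent_eval_eq_sum:
  assumes "finite A" "lsupp f \<subseteq> A"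
  shows "laurent_eval f a = (\<Sum>n\<in>A. real (f n) * a powi n)"
  unfolding laurent_eval_def
  by (rule sum.mono_neutral_left) (use assms in \<open>auto simp: lsupp_def\<close>)

lemma lsupp_shift: "lsupp (\<lambda>n. g (n - k)) = (\<lambda>n. n + k) ` lsupp g"
  unfolding lsupp_def by (auto simp: image_iff) (metis diff_add_cancel)

lemma is_laurent_shift: "is_laurent g \<Longrightarrow> is_laurent (\<lambda>n. g (n - k))"
  by (simp add: is_laurent_def lsupp_shift)

lemma is_laurent_add: "is_laurent f \<Longrightarrow> is_laurent g \<Longrightarrow> is_laurent (\<lambda>n. f n + g n :: nat)"
  unfolding is_laurent_def by (rule finite_subset[of _ "lsupp f \<union> lsupp g"]) (auto simp: lsupp_def)

lemma lsupp_diff_subset: "lsupp (\<lambda>n. f n - g n :: nat) \<subseteq> lsupp f"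
  by (auto simp: lsupp_def)

lemma is_laurent_diff: "is_laurent f \<Longrightarrow> is_laurent (\<lambda>n. f n - g n :: nat)"
  unfolding is_laurent_def using lsupp_diff_subset by (rule finite_subset)

lemma laurent_eval_add:
  assumes "is_laurent f" "is_laurent g"
  shows "laurent_eval (\<lambda>n. f n + g n) a = laurent_eval f a + laurent_eval g a"
proof -
  let ?A = "lsupp f \<union> lsupp g"
  have A: "finite ?A" using assms unfolding is_laurent_def by simp
  have "lsupp (\<lambda>n. f n + g n) \<subseteq> ?A" by (auto simp: lsupp_def)
  then have "laurent_eval (\<lambda>n. f n + g n) a = (\<Sum>n\<in>?A. real (f n + g n) * a powi n)"
    using A by (rule laurent_eval_eq_sum[rotated])
  also have "\<dots> = (\<Sum>n\<in>?A. real (f n) * a powi n) + (\<Sum>n\<in>?A. real (g n) * a powi n)"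
    by (simp add: sum.distrib distrib_right)
  also have "\<dots> = laurent_eval f a + laurent_eval g a"
    by (simp add: laurent_eval_eq_sum[OF A])
  finally show ?thesis .
qed

lemma laurent_eval_diff:
  assumes "is_laurent f" "\<And>n. g n \<le> f n"
  shows "laurent_eval (\<lambda>n. f n - g n) a = laurent_eval f a - laurent_eval g a"
proof -
  have A: "finite (lsupp f)" using assms(1) unfolding is_laurent_def .
  have "lsupp g \<subseteq> lsupp f"
    using assms(2) by (auto simp: lsupp_def intro: less_le_trans)
  then have "laurent_eval (\<lambda>n. f n - g n) a = (\<Sum>n\<in>lsupp f. real (f n - g n) * a powi n)"
    and "laurent_eval g a = (\<Sum>n\<in>lsupp f. real (g n) * a powi n)"
    using A lsupp_diff_subset by (simp_all add: laurent_eval_eq_sum)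
  moreover have "laurent_eval f a = (\<Sum>n\<in>lsupp f. real (f n) * a powi n)"
    by (simp add: laurent_eval_def)
  ultimately show ?thesis
    using assms(2) by (simp add: of_nat_diff left_diff_distrib sum_subtractf)
qed

lemma laurent_eval_shift:
  fixes a :: real
  assumes "a \<noteq> 0"
  shows "laurent_eval (\<lambda>n. g (n - k)) a = a powi k * laurent_eval g a"
proof -
  have "laurent_eval (\<lambda>n. g (n - k)) a = (\<Sum>n\<in>lsupp g. real (g n) * a powi (n + k))"
    unfolding laurent_eval_def lsupp_shift by (simp add: sum.reindex inj_on_def)
  also have "\<dots> = a powi k * laurent_eval g a"
    using assms by (simp add: laurent_eval_def sum_distrib_left power_int_add algebra_simps)
  finally show ?thesis .
qed

lemma laurent_eval_pos:
  assumes "is_laurent f" "f \<noteq> (\<lambda>_. 0)" "0 < a"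
  shows "0 < laurent_eval f a"
proof -
  obtain k where "f k \<noteq> 0" using assms(2) by auto
  then have "k \<in> lsupp f" by (simp add: lsupp_def)
  with assms show ?thesis unfolding laurent_eval_def is_laurent_def
    by (intro sum_pos2[of _ k]) (auto simp: lsupp_def)
qed

lemma lsupp_laurent_of_poly: "lsupp (laurent_of_poly p) \<subseteq> int ` {..degree p}"
  by (auto simp: lsupp_def laurent_of_poly_def image_iff le_degree intro!: bexI[of _ "nat _"])

lemma is_laurent_laurent_of_poly: "is_laurent (laurent_of_poly p)"
  unfolding is_laurent_def using lsupp_laurent_of_poly by (rule finite_subset) simp

lemma laurent_of_poly_eq_0_iff: "laurent_of_poly p = (\<lambda>_. 0) \<longleftrightarrow> p = 0"
proof
  assume "laurent_of_poly p = (\<lambda>_. 0)"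
  then have "coeff p i = 0" for i
    by (metis laurent_of_poly_def of_nat_0_le_iff nat_int)
  then show "p = 0" by (simp add: poly_eqI)
qed (simp add: laurent_of_poly_def fun_eq_iff)

lemma laurent_eval_laurent_of_poly:
  "laurent_eval (laurent_of_poly p) a = poly (map_poly real p) a"
proof -
  have "laurent_eval (laurent_of_poly p) a
      = (\<Sum>n\<in>int ` {..degree p}. real (laurent_of_poly p n) * a powi n)"
    by (rule laurent_eval_eq_sum) (simp_all add: lsupp_laurent_of_poly)
  also have "\<dots> = (\<Sum>i\<le>degree p. real (coeff p i) * a ^ i)"
    by (simp add: sum.reindex laurent_of_poly_def)
  also have "\<dots> = poly (map_poly real p) a"
    by (simp add: poly_altdef degree_map_poly coeff_map_poly)
  finally show ?thesis .
qed

lemma poly_nat_poly_pos: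
  fixes p :: "nat poly" and a :: real
  assumes "p \<noteq> 0" "0 < a"
  shows "0 < poly (map_poly real p) a"
  using laurent_eval_pos[OF is_laurent_laurent_of_poly] assms
  by (simp add: laurent_of_poly_eq_0_iff laurent_eval_laurent_of_poly)

lemma laurent_eval_in_M_alpha: "is_laurent f \<Longrightarrow> laurent_eval f a \<in> M_alpha a"
  unfolding M_alpha_def by blast

lemma zero_in_M_alpha: "0 \<in> M_alpha a"
proof -
  have "laurent_eval (\<lambda>_. 0) a = 0" by (simp add: laurent_eval_def lsupp_def)
  then show ?thesis
    using laurent_eval_in_M_alpha[of "\<lambda>_. 0" a] by (simp add: is_laurent_def lsupp_def)
qed

lemma M_alpha_nonneg: "0 < a \<Longrightarrow> x \<in> M_alpha a \<Longrightarrow> 0 \<le> x"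
  unfolding M_alpha_def laurent_eval_def by (auto intro!: sum_nonneg)

lemma M_alpha_add:
  assumes "x \<in> M_alpha a" "y \<in> M_alpha a"
  shows "x + y \<in> M_alpha a"
proof -
  obtain f g where f: "is_laurent f" "x = laurent_eval f a" and g: "is_laurent g" "y = laurent_eval g a"
    using assms unfolding M_alpha_def by blast
  then have "x + y = laurent_eval (\<lambda>n. f n + g n) a" by (simp add: laurent_eval_add)
  with f g show ?thesis by (simp add: laurent_eval_in_M_alpha is_laurent_add)
qed

lemma M_alpha_mult_powi:
  fixes a :: real
  assumes "a \<noteq> 0" "x \<in> M_alpha a"
  shows "a powi k * x \<in> M_alpha a"
proof -
  obtain f where f: "is_laurent f" "x = laurent_eval f a"
    using assms(2) unfolding M_alpha_def by blast
  then have "a powi k * x = laurent_eval (\<lambda>n. f (n - k)) a" by (simp add: laurent_eval_shift assms(1))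
  with f show ?thesis by (simp add: laurent_eval_in_M_alpha is_laurent_shift)
qed

lemma not_accp_M_alpha:
  fixes a c :: real
  assumes "0 < a" "c \<in> M_alpha a" "c - a powi k * c \<in> M_alpha a" "c - a powi k * c \<noteq> 0"
  shows "\<not> accp (M_alpha a)"
proof (rule not_accp_if_strictly_descending)
  define r where "r = c - a powi k * c"
  show "a powi (int n * k) * c \<in> M_alpha a" "a powi (int n * k) * r \<in> M_alpha a"
    and "a powi (int n * k) * r \<noteq> 0" for n
    using assms by (simp_all add: M_alpha_mult_powi r_def)
  show "a powi (int n * k) * c = a powi (int (Suc n) * k) * c + a powi (int n * k) * r" for n
    using assms(1) by (simp add: r_def distrib_right power_int_add algebra_simps)
qed (use assms(1) in \<open>simp_all add: M_alpha_nonneg zero_in_M_alpha M_alpha_add\<close>)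

lemma power_int_neq_1:
  fixes a :: real
  assumes "0 < a" "a < 1" "k \<noteq> 0"
  shows "a powi k \<noteq> 1"
  using power_int_strict_decreasing[of 0 k a] power_int_strict_decreasing[of k 0 a] assms
  by (cases "k < 0") auto

lemma rat_poly_clear_denominators:
  fixes f :: "rat poly"
  shows "\<exists>d::nat. 0 < d \<and> (\<forall>i. coeff (smult (of_nat d) f) i \<in> \<int>)"
proof (induction f)
  case 0
  show ?case by (intro exI[of _ 1]) simp
next
  case (pCons a f)
  then obtain d :: nat where d: "0 < d" "\<And>i. coeff (smult (of_nat d) f) i \<in> \<int>" by blast
  obtain u v where uv: "quotient_of a = (u, v)" by fastforce
  have "0 < v" using quotient_of_denom_pos[OF uv] .
  then have "of_int v * a = of_int u" by (simp add: quotient_of_div[OF uv])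
  have v_d: "of_nat (nat v * d) = (of_int v * of_nat d :: rat)" using \<open>0 < v\<close> by simp
  have "coeff (smult (of_nat (nat v * d)) (pCons a f)) i \<in> \<int>" for i
  proof (cases i)
    case 0
    then have "coeff (smult (of_nat (nat v * d)) (pCons a f)) i = of_nat d * of_int u"
      by (simp only: v_d coeff_smult coeff_pCons_0 flip: \<open>of_int v * a = of_int u\<close>) simp
    then show ?thesis by simp
  next
    case (Suc j)
    then have "coeff (smult (of_nat (nat v * d)) (pCons a f)) i
        = of_int v * coeff (smult (of_nat d) f) j"
      by (simp only: v_d coeff_smult coeff_pCons_Suc mult.assoc)
    then show ?thesis using d(2) by simp
  qed
  then show ?case using \<open>0 < d\<close> \<open>0 < v\<close> by (intro exI[of _ "nat v * d"]) simp
qed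

lemma minimal_pairE:
  assumes "is_minimal_pair f p q"
  obtains l :: nat where "0 < l" "smult (of_nat l) f = map_poly of_nat p - map_poly of_nat q"
    and "\<And>i. coeff p i = 0 \<or> coeff q i = 0"
proof -
  obtain l :: nat where l: "l = (LEAST l::nat. 0 < l \<and> (\<forall>i. coeff (smult (of_nat l) f) i \<in> \<int>))"
    and "smult (of_nat l) f = map_poly of_nat p - map_poly of_nat q"
    and "\<forall>i. coeff p i = 0 \<or> coeff q i = 0"
    using assms unfolding is_minimal_pair_def by blast
  \<comment> \<open>A common denominator exists, so the \<open>LEAST\<close> is not taken over an empty set.\<close>
  moreover have "0 < l"
    unfolding l using LeastI_ex[OF rat_poly_clear_denominators[of f]] by blast
  ultimately show ?thesis using that by blast
qed

lemma minimal_pair_poly_eq: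
  assumes "is_min_poly_rat a f" "is_minimal_pair f p q"
  shows "poly (map_poly real p) a = poly (map_poly real q) a"
proof -
  obtain l :: nat where l: "smult (of_nat l) f = map_poly of_nat p - map_poly of_nat q"
    using assms(2) by (rule minimal_pairE)
  have "smult (real l) (map_poly of_rat f) = map_poly real p - map_poly real q"
  proof (rule poly_eqI)
    fix i
    have "of_nat l * coeff f i = of_nat (coeff p i) - (of_nat (coeff q i) :: rat)"
      using arg_cong[OF l, of "\<lambda>g. coeff g i"] by (simp add: coeff_map_poly)
    then have "real l * of_rat (coeff f i) = real (coeff p i) - real (coeff q i)"
      by (metis of_rat_diff of_rat_mult of_rat_of_nat_eq)
    then show "coeff (smult (real l) (map_poly of_rat f)) i = coeff (map_poly real p - map_poly real q) i"
      by (simp add: coeff_map_poly)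
  qed
  then have "real l * poly (map_poly of_rat f) a = poly (map_poly real p) a - poly (map_poly real q) a"
    by (metis poly_smult poly_diff)
  with assms(1) show ?thesis by (simp add: is_min_poly_rat_def)
qed

lemma minimal_pair_snd_nonzero:
  assumes "is_min_poly_rat a f" "is_minimal_pair f p q" "0 < a"
  shows "q \<noteq> 0"
proof
  assume "q = 0"
  then have "p = 0"
    using minimal_pair_poly_eq[OF assms(1,2)] poly_nat_poly_pos[OF _ assms(3)] by fastforce
  obtain l :: nat where "0 < l" "smult (of_nat l) f = map_poly of_nat p - map_poly of_nat q"
    using assms(2) by (rule minimal_pairE)
  with \<open>p = 0\<close> \<open>q = 0\<close> assms(1) show False by (auto simp: is_min_poly_rat_def)
qed

lemma minimal_pair_snd_eq_0_if_le:
  assumes "is_minimal_pair f p q" "\<And>n. laurent_of_poly q n \<le> laurent_of_poly p n"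
  shows "q = 0"
proof -
  have "coeff q i = 0" for i
  proof -
    have "coeff q i \<le> coeff p i"
      using assms(2)[of "int i"] by (simp add: laurent_of_poly_def)
    moreover have "coeff p i = 0 \<or> coeff q i = 0"
      using assms(1) by (rule minimal_pairE) simp
    ultimately show ?thesis by auto
  qed
  then show "q = 0" by (simp add: poly_eqI)
qed

lemma shift_le_if_in_N0_laurent:
  fixes Q g h :: "int \<Rightarrow> nat"
  assumes "is_laurent Q" "Q k \<noteq> 0"
    and "in_N0_laurent (\<lambda>n. int (h n) - int (laurent_mult Q g n))"
  shows "g (n - k) \<le> h n"
proof -
  have "g (n - k) \<le> Q k * g (n - k)" using assms(2) by simp
  also have "\<dots> \<le> laurent_mult Q g n"
    unfolding laurent_mult_def using assms(1,2)
    by (intro member_le_sum[where f = "\<lambda>j. Q j * g (n - j)"]) (auto simp: is_laurent_def lsupp_def)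
  also have "\<dots> \<le> h n" using assms(3) by (simp add: in_N0_laurent_def)
  finally show ?thesis .
qed

lemma not_accp_if_shift_le:
  fixes a :: real
  assumes "0 < a" "a < 1" "k \<noteq> 0" "q \<noteq> 0"
    and "poly (map_poly real p) a = poly (map_poly real q) a"
    and "\<And>n. laurent_of_poly q (n - k) \<le> laurent_of_poly p n"
  shows "\<not> accp (M_alpha a)"
proof (rule not_accp_M_alpha)
  define c where "c = poly (map_poly real q) a"
  show "c \<in> M_alpha a" unfolding c_def
    by (metis laurent_eval_in_M_alpha is_laurent_laurent_of_poly laurent_eval_laurent_of_poly)
  have "laurent_eval (\<lambda>n. laurent_of_poly p n - laurent_of_poly q (n - k)) a = c - a powi k * c"
    using assms(1,5,6) unfolding c_def
    by (simp add: laurent_eval_diff is_laurent_laurent_of_poly laurent_eval_shift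
        laurent_eval_laurent_of_poly)
  then show "c - a powi k * c \<in> M_alpha a"
    by (metis laurent_eval_in_M_alpha is_laurent_diff is_laurent_laurent_of_poly)
  show "c - a powi k * c \<noteq> 0"
    using power_int_neq_1[OF assms(1-3)] poly_nat_poly_pos[OF assms(4,1)] unfolding c_def by simp
qed (rule assms(1))

theorem proposition4p1:
  fixes \<alpha> :: real and f :: "rat poly" and p q :: "nat poly"
  assumes "algebraic \<alpha>" and "0 < \<alpha>" and "\<alpha> < 1"
    and "is_min_poly_rat \<alpha> f"
    and "is_minimal_pair f p q"
    and "accp (M_alpha \<alpha>)"
  shows "\<forall>Q :: int \<Rightarrow> nat. is_laurent Q \<and> Q \<noteq> (\<lambda>_. 0) \<longrightarrow>
    \<not> in_N0_laurent (\<lambda>n. int (laurent_of_poly p n) - int (laurent_mult Q (laurent_of_poly q) n))"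
proof (intro allI impI notI)
  fix Q :: "int \<Rightarrow> nat"
  assume "is_laurent Q \<and> Q \<noteq> (\<lambda>_. 0)"
    and N0: "in_N0_laurent (\<lambda>n. int (laurent_of_poly p n) - int (laurent_mult Q (laurent_of_poly q) n))"
  then obtain k where "is_laurent Q" "Q k \<noteq> 0" by auto
  then have le: "laurent_of_poly q (n - k) \<le> laurent_of_poly p n" for n
    using N0 by (rule shift_le_if_in_N0_laurent)
  have "q \<noteq> 0" using assms(4,5,2) by (rule minimal_pair_snd_nonzero)
  show False
  proof (cases "k = 0")
    case True
    with le have "q = 0" using assms(5) minimal_pair_snd_eq_0_if_le by simp
    with \<open>q \<noteq> 0\<close> show False ..
  next
    case False
    with le \<open>q \<noteq> 0\<close> minimal_pair_poly_eq[OF assms(4,5)] have "\<not> accp (M_alpha \<alpha>)"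
      using assms(2,3) by (intro not_accp_if_shift_le)
    with assms(6) show False by contradiction
  qed
qed

end
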